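(* Let $(R,[\cdot_\lambda\cdot],\alpha,\beta)$ be a BiHom-Lie conformal superalgebra, let $k,l,s,t\ge0$ be integers, and let $f\in\mathrm{Der}_{\alpha^k\beta^l}(R)$ and $g\in\mathrm{Der}_{\alpha^s\beta^t}(R)$ be homogeneous. Define $[f_\lambda g]_\mu(a)=f_\lambda(g_{\mu-\lambda}a)-(-1)^{|f||g|}g_{\mu-\lambda}(f_\lambda a)$ for $a\in R$. Then $[f_\lambda g]\in\mathrm{Der}_{\alpha^{k+s}\beta^{l+t}}(R)[\lambda]$, i.e. writing $[f_\lambda g]_\mu=\sum_n\lambda^n h^{(n)}_\mu$, each $h^{(n)}$ is an $\alpha^{k+s}\beta^{l+t}$-derivation of $R$.
   Context: All spaces are over $\mathbb{C}$. For a $\mathbb{C}[\partial]$-module $V$, $V[\lambda]=\mathbb{C}[\lambda]\otimes V$. $|a|$ denotes the parity of a homogeneous element. Substitution $\lambda\mapsto-\lambda-\partial$ means: expand in powers of $\lambda$ and replace $\lambda$ by $-\lambda-\partial$, $\partial$ acting on the coefficients. A BiHom-Lie conformal superalgebra $(R,[\cdot_\lambda\cdot],\alpha,\beta)$ is a $\mathbb{Z}_2$-graded $\mathbb{C}[\partial]$-module $R$ with two commuting linear maps $\alpha,\beta$ and a $\mathbb{C}$-linear map $R\otimes R\to R[\lambda]$, $a\otimes b\mapsto[a_\lambda b]$, with $[R_{i\,\lambda}R_j]\subseteq R_{i+j}[\lambda]$, such that for all homogeneous $a,b,c$: (1) $\alpha\partial=\partial\alpha$, $\beta\partial=\partial\beta$;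 (2) $\alpha([a_\lambda b])=[\alpha(a)_\lambda\alpha(b)]$, $\beta([a_\lambda b])=[\beta(a)_\lambda\beta(b)]$; (3) $[(\partial a)_\lambda b]=-\lambda[a_\lambda b]$, $[a_\lambda(\partial b)]=(\partial+\lambda)[a_\lambda b]$; (4) $[\beta(a)_\lambda\alpha(b)]=-(-1)^{|a||b|}[\beta(b)_{-\lambda-\partial}\alpha(a)]$; (5) $[\alpha\beta(a)_\lambda[b_\mu c]]=[[\beta(a)_\lambda b]_{\lambda+\mu}\beta(c)]+(-1)^{|a||b|}[\beta(b)_\mu[\alpha(a)_\lambda c]]$. A conformal linear map $f:R\to R$ of parity $|f|\in\mathbb{Z}_2$ is a family of $\mathbb{C}$-linear maps $f_\lambda:R\to R[\lambda]$ with $f_\lambda\partial=(\partial+\lambda)f_\lambda$ and $f_\lambda(R_\theta)\subseteq R_{\theta+|f|}[\lambda]$. For integers $k,l\ge0$, an $\alpha^k\beta^l$-derivation of $R$ is a homogeneous conformal linear map $f$ with $f_\lambda\circ\alpha=\alpha\circ f_\lambda$, $f_\lambda\circ\beta=\beta\circ f_\lambda$, and $f_\lambda([a_\mu b])=[f_\lambda(a)_{\lambda+\mu}\alpha^k\beta^l(b)]+(-1)^{|a||f|}[\alpha^k\beta^l(a)_\mu f_\lambda(b)]$ for all homogeneous $a,b\in R$. $\mathrm{Der}_{\alpha^k\beta^l}(R)$ denotes the span of the $\alpha^k\beta^l$-derivations. *)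

theory Defs
  imports Complex_Main
begin

text \<open>
Conventions.
 * R is a type 'r with an abelian group structure and a complex scalar
   multiplication sc (a complex vector space, locale module).
 * An element of R[lambda] is encoded by its coefficient function
   p :: nat => 'r (p n is the coefficient of lambda^n), required to have finite support.
 * An element of R[lambda,mu] is encoded by w :: nat => nat => 'r
   (w i j is the coefficient of lambda^i mu^j).
 * The bracket [a_lambda b] is br a b :: nat => 'r; a conformal linear map
   f_lambda is f :: 'r => nat => 'r, f a n = coefficient of lambda^n in f_lambda(a).
 * Parities are booleans (True = odd); Rg p is the homogeneous component R_p.
\<close>

record 'r lcsa =
  sc    :: "complex \<Rightarrow> 'r \<Rightarrow> 'r"
  D     :: "'r \<Rightarrow> 'r"
  Rg    :: "bool \<Rightarrow> 'r set"
  br    :: "'r \<Rightarrow> 'r \<Rightarrow> nat \<Rightarrow> 'r"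
  alph  :: "'r \<Rightarrow> 'r"
  bet   :: "'r \<Rightarrow> 'r"

text \<open>(-1)^{p q} style signs, parities as booleans\<close>
definition sgn2 :: "bool \<Rightarrow> complex" where
  "sgn2 p = (if p then -1 else 1)"

definition fin_supp :: "(nat \<Rightarrow> 'r::zero) \<Rightarrow> bool" where
  "fin_supp p \<longleftrightarrow> finite {n. p n \<noteq> 0}"

text \<open>lambda-shift: if w n m is the coefficient of lambda^n nu^m, then
  shift2 sc w i j is the coefficient of lambda^i mu^j after substituting nu := lambda + mu.\<close>
definition shift2 :: "(complex \<Rightarrow> 'r \<Rightarrow> 'r) \<Rightarrow> (nat \<Rightarrow> nat \<Rightarrow> 'r::ab_group_add) \<Rightarrow> nat \<Rightarrow> nat \<Rightarrow> 'r" where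
  "shift2 s w i j = (\<Sum>n\<in>{..i}. s (of_nat ((i - n + j) choose j)) (w n (i - n + j)))"

text \<open>Substitution lambda := -lambda - partial in p(lambda) = sum lambda^n x_n:
  p(-lambda-partial) = sum_n (-lambda-partial)^n x_n, partial acting on the coefficients.
  Coefficient of lambda^i.\<close>
definition subst_neg :: "(complex \<Rightarrow> 'r \<Rightarrow> 'r) \<Rightarrow> ('r \<Rightarrow> 'r) \<Rightarrow> (nat \<Rightarrow> 'r::ab_group_add) \<Rightarrow> nat \<Rightarrow> 'r" where
  "subst_neg s d p i =
     (\<Sum>n\<in>{n. p n \<noteq> 0 \<and> i \<le> n}. s ((-1) ^ n * of_nat (n choose i)) ((d ^^ (n - i)) (p n)))"

definition lin :: "(complex \<Rightarrow> 'r \<Rightarrow> 'r) \<Rightarrow> ('r::ab_group_add \<Rightarrow> 'r) \<Rightarrow> bool" where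
  "lin s h \<longleftrightarrow> (\<forall>x y. h (x + y) = h x + h y) \<and> (\<forall>c x. h (s c x) = s c (h x))"

definition csubspace :: "(complex \<Rightarrow> 'r \<Rightarrow> 'r) \<Rightarrow> 'r::ab_group_add set \<Rightarrow> bool" where
  "csubspace s S \<longleftrightarrow> 0 \<in> S \<and> (\<forall>x\<in>S. \<forall>y\<in>S. x + y \<in> S) \<and> (\<forall>c. \<forall>x\<in>S. s c x \<in> S)"

text \<open>BiHom-Lie conformal superalgebra (alpha, beta taken to be even, i.e. parity preserving).\<close>
definition BiHom_LCSA :: "('r::ab_group_add) lcsa \<Rightarrow> bool" where
  "BiHom_LCSA R \<longleftrightarrow>
    \<comment> \<open>complex vector space, Z2-grading R = R_0 (+) R_1, C[partial]-module\<close>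
    module (sc R) \<and>
    csubspace (sc R) (Rg R False) \<and> csubspace (sc R) (Rg R True) \<and>
    (\<forall>x. \<exists>!y. fst y \<in> Rg R False \<and> snd y \<in> Rg R True \<and> x = fst y + snd y) \<and>
    lin (sc R) (D R) \<and> (\<forall>p. \<forall>x\<in>Rg R p. D R x \<in> Rg R p) \<and>
    \<comment> \<open>alpha, beta: commuting even linear maps\<close>
    lin (sc R) (alph R) \<and> lin (sc R) (bet R) \<and>
    (\<forall>p. \<forall>x\<in>Rg R p. alph R x \<in> Rg R p \<and> bet R x \<in> Rg R p) \<and>
    (\<forall>x. alph R (bet R x) = bet R (alph R x)) \<and>
    \<comment> \<open>bracket: C-bilinear map R x R -> R[lambda], graded\<close>
    (\<forall>a b. fin_supp (br R a b)) \<and>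
    (\<forall>b n. lin (sc R) (\<lambda>a. br R a b n)) \<and> (\<forall>a n. lin (sc R) (\<lambda>b. br R a b n)) \<and>
    (\<forall>p q a b n. a \<in> Rg R p \<longrightarrow> b \<in> Rg R q \<longrightarrow> br R a b n \<in> Rg R (p \<noteq> q)) \<and>
    \<comment> \<open>(1)\<close>
    (\<forall>x. alph R (D R x) = D R (alph R x)) \<and> (\<forall>x. bet R (D R x) = D R (bet R x)) \<and>
    \<comment> \<open>(2)\<close>
    (\<forall>a b n. alph R (br R a b n) = br R (alph R a) (alph R b) n) \<and>
    (\<forall>a b n. bet R (br R a b n) = br R (bet R a) (bet R b) n) \<and>
    \<comment> \<open>(3)\<close>
    (\<forall>a b n. br R (D R a) b n = (if n = 0 then 0 else - br R a b (n - 1))) \<and>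
    (\<forall>a b n. br R a (D R b) n = D R (br R a b n) + (if n = 0 then 0 else br R a b (n - 1))) \<and>
    \<comment> \<open>(4) skew-symmetry\<close>
    (\<forall>p q a b n. a \<in> Rg R p \<longrightarrow> b \<in> Rg R q \<longrightarrow>
       br R (bet R a) (alph R b) n =
       - sc R (sgn2 (p \<and> q)) (subst_neg (sc R) (D R) (br R (bet R b) (alph R a)) n)) \<and>
    \<comment> \<open>(5) BiHom-Jacobi identity, coefficient of lambda^i mu^j\<close>
    (\<forall>p q a b c i j. a \<in> Rg R p \<longrightarrow> b \<in> Rg R q \<longrightarrow> (c \<in> Rg R False \<or> c \<in> Rg R True) \<longrightarrow>
       br R (alph R (bet R a)) (br R b c j) i =
         shift2 (sc R) (\<lambda>n m. br R (br R (bet R a) b n) (bet R c) m) i j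
         + sc R (sgn2 (p \<and> q)) (br R (bet R b) (br R (alph R a) c i) j))"

definition conf_lin :: "('r::ab_group_add) lcsa \<Rightarrow> bool \<Rightarrow> ('r \<Rightarrow> nat \<Rightarrow> 'r) \<Rightarrow> bool" where
  "conf_lin R pf f \<longleftrightarrow>
    (\<forall>a. fin_supp (f a)) \<and> (\<forall>n. lin (sc R) (\<lambda>a. f a n)) \<and>
    (\<forall>a n. f (D R a) n = D R (f a n) + (if n = 0 then 0 else f a (n - 1))) \<and>
    (\<forall>p a n. a \<in> Rg R p \<longrightarrow> f a n \<in> Rg R (p \<noteq> pf))"

definition hder :: "('r::ab_group_add) lcsa \<Rightarrow> nat \<Rightarrow> nat \<Rightarrow> bool \<Rightarrow> ('r \<Rightarrow> nat \<Rightarrow> 'r) \<Rightarrow> bool" where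
  "hder R k l pf f \<longleftrightarrow>
    conf_lin R pf f \<and>
    (\<forall>a n. f (alph R a) n = alph R (f a n)) \<and> (\<forall>a n. f (bet R a) n = bet R (f a n)) \<and>
    (\<forall>p q a b i j. a \<in> Rg R p \<longrightarrow> b \<in> Rg R q \<longrightarrow>
       f (br R a b j) i =
         shift2 (sc R) (\<lambda>n m. br R (f a n) (((alph R ^^ k) \<circ> (bet R ^^ l)) b) m) i j
         + sc R (sgn2 (p \<and> pf)) (br R (((alph R ^^ k) \<circ> (bet R ^^ l)) a) (f b i) j))"

definition is_der :: "('r::ab_group_add) lcsa \<Rightarrow> nat \<Rightarrow> nat \<Rightarrow> ('r \<Rightarrow> nat \<Rightarrow> 'r) \<Rightarrow> bool" where
  "is_der R k l f \<longleftrightarrow> (\<exists>pf. hder R k l pf f)"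

text \<open>[f_lambda g]_mu(a) = f_lambda(g_{mu-lambda} a) - (-1)^{|f||g|} g_{mu-lambda}(f_lambda a).
  cbr R pf pg f g n a j is the coefficient of lambda^n mu^j, so that
  (\<lambda>a j. cbr R pf pg f g n a j) is h^(n).\<close>
definition cbr :: "('r::ab_group_add) lcsa \<Rightarrow> bool \<Rightarrow> bool \<Rightarrow> ('r \<Rightarrow> nat \<Rightarrow> 'r) \<Rightarrow> ('r \<Rightarrow> nat \<Rightarrow> 'r)
                   \<Rightarrow> nat \<Rightarrow> 'r \<Rightarrow> nat \<Rightarrow> 'r" where
  "cbr R pf pg f g i a j =
     (\<Sum>p\<in>{..i}. sc R ((-1) ^ (i - p) * of_nat ((i - p + j) choose (i - p))) (f (g a (i - p + j)) p))
     - sc R (sgn2 (pf \<and> pg))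
         (\<Sum>p\<in>{..i}. sc R ((-1) ^ (i - p) * of_nat ((i - p + j) choose (i - p))) (g (f a p) (i - p + j)))"

end

theory Submission
  imports Defs
begin

(* Elements of R[lambda], R[lambda,mu], ... are handled through their values at complex points:
   a polynomial with coefficients in a complex vector space that vanishes at every point is zero,
   so an identity between coefficient arrays may be checked after substituting complex numbers
   for the variables.

   Substituting lambda := x turns an alpha^k beta^l-derivation f into a linear map F = f_x with
   F [a_z b] = [(F a)_(x+z) (alpha^k beta^l b)] +- [(alpha^k beta^l a)_z (F b)] and
   F (partial a) = partial (F a) + x F a.  Evaluated at (lambda, mu) := (x, y), [f_lambda g]_mu
   becomes the supercommutator of F = f_x and G = g_(y-x), and the supercommutator
   of two such maps, at x and at u, obeys the same two rules at x + u with alpha^(k+s) beta^(l+t).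
   Only the linear structure of R enters; none of the axioms (1)-(5) is used. *)

lemma lin_additive: "lin S T \<Longrightarrow> additive T"
  unfolding lin_def additive_def by auto

lemmas lin_zero = additive.zero[OF lin_additive]
   and lin_diff = additive.diff[OF lin_additive]
   and lin_sum = additive.sum[OF lin_additive]

lemma lin_add: "lin S T \<Longrightarrow> T (a + b) = T a + T b"
  by (simp add: lin_def)

lemma lin_scale_comm: "lin S T \<Longrightarrow> T (S c a) = S c (T a)"
  by (simp add: lin_def)

lemma lin_comp: "lin S T \<Longrightarrow> lin S U \<Longrightarrow> lin S (\<lambda>a. T (U a))"
  by (simp add: lin_def)

lemma lin_scale: "module S \<Longrightarrow> lin S (S c)"
  unfolding lin_def by (simp add: module.scale_right_distrib module.scale_left_commute)

lemma lin_diff_scale: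
  "module S \<Longrightarrow> lin S T \<Longrightarrow> lin S U \<Longrightarrow> lin S (\<lambda>a. T a - S c (U a))"
  unfolding lin_def
  by (simp add: module.scale_right_distrib module.scale_right_diff_distrib module.scale_left_commute)

lemma lin_sum_fun:
  "module S \<Longrightarrow> (\<And>i. i \<in> I \<Longrightarrow> lin S (T i)) \<Longrightarrow> lin S (\<lambda>a. \<Sum>i\<in>I. T i a)"
  unfolding lin_def by (simp add: sum.distrib module.scale_sum_right)

lemma csubspace_iff_subspace: "module S \<Longrightarrow> csubspace S A \<longleftrightarrow> module.subspace S A"
  by (simp add: csubspace_def module.subspace_def)

lemma funpow_commute_funpow:
  assumes "\<And>x. f (g x) = g (f x)"
  shows "(f ^^ m) ((g ^^ n) x) = (g ^^ n) ((f ^^ m) x)"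
proof -
  have f_pow: "(f ^^ m) (g y) = g ((f ^^ m) y)" for y
    by (induction m) (simp_all add: assms)
  show ?thesis
    by (induction n) (simp_all add: f_pow)
qed

section \<open>Polynomials with coefficients in a complex vector space\<close>

lemma fin_supp_iff_bounded: "fin_supp p \<longleftrightarrow> (\<exists>N. \<forall>n\<ge>N. p n = 0)"
proof
  assume "fin_supp p"
  then obtain N where "\<forall>n\<in>{n. p n \<noteq> 0}. n < N"
    unfolding fin_supp_def finite_nat_set_iff_bounded by blast
  then show "\<exists>N. \<forall>n\<ge>N. p n = 0" by (auto simp: not_less[symmetric])
next
  assume "\<exists>N. \<forall>n\<ge>N. p n = 0"
  then obtain N where "\<forall>n\<ge>N. p n = 0" ..
  then have "{n. p n \<noteq> 0} \<subseteq> {..<N}" by (auto simp: not_less[symmetric])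
  then show "fin_supp p" unfolding fin_supp_def using finite_subset by blast
qed

lemma fin_supp_map: "T 0 = 0 \<Longrightarrow> fin_supp p \<Longrightarrow> fin_supp (\<lambda>n. T (p n))"
  unfolding fin_supp_def by (rule finite_subset[of _ "{n. p n \<noteq> 0}"]) auto

lemma fin_supp_shift: "fin_supp p \<Longrightarrow> fin_supp (\<lambda>n. if n = 0 then 0 else p (n - 1))"
proof -
  assume "fin_supp p"
  then obtain N where "\<forall>n\<ge>N. p n = 0" unfolding fin_supp_iff_bounded ..
  then have "\<forall>n\<ge>Suc N. (if n = 0 then 0 else p (n - 1)) = 0" by auto
  then show ?thesis unfolding fin_supp_iff_bounded by blast
qed

definition peval :: "(complex \<Rightarrow> 'b \<Rightarrow> 'b) \<Rightarrow> (nat \<Rightarrow> 'b::ab_group_add) \<Rightarrow> complex \<Rightarrow> 'b" where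
  "peval S p x = (\<Sum>n | p n \<noteq> 0. S (x ^ n) (p n))"

lemma peval_eq_sum:
  assumes "module S" and "\<forall>n\<ge>N. p n = 0"
  shows "peval S p x = (\<Sum>n<N. S (x ^ n) (p n))"
  unfolding peval_def
  by (rule sum.mono_neutral_left) (use assms module.scale_zero_right in \<open>auto simp: not_less[symmetric]\<close>)

lemma peval_linear_map:
  assumes "module S" "lin S T" "fin_supp p"
  shows "T (peval S p x) = peval S (\<lambda>n. T (p n)) x"
proof -
  obtain N where N: "\<forall>n\<ge>N. p n = 0" using assms(3) fin_supp_iff_bounded by blast
  then have TN: "\<forall>n\<ge>N. T (p n) = 0" using lin_zero[OF assms(2)] by simp
  show ?thesis
    unfolding peval_eq_sum[OF assms(1) N] peval_eq_sum[OF assms(1) TN]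
    by (simp add: lin_sum[OF assms(2)] lin_scale_comm[OF assms(2)])
qed

lemma peval_scale:
  assumes "module S" "fin_supp p"
  shows "peval S (\<lambda>n. S c (p n)) x = S c (peval S p x)"
  using peval_linear_map[OF assms(1) lin_scale[OF assms(1)] assms(2)] by simp

lemma peval_add:
  assumes "module S" "fin_supp p" "fin_supp q"
  shows "peval S (\<lambda>n. p n + q n) x = peval S p x + peval S q x"
proof -
  obtain N1 N2 where "\<forall>n\<ge>N1. p n = 0" "\<forall>n\<ge>N2. q n = 0"
    using assms(2,3) unfolding fin_supp_iff_bounded by blast
  then have N: "\<forall>n\<ge>max N1 N2. p n = 0" "\<forall>n\<ge>max N1 N2. q n = 0"
    and N': "\<forall>n\<ge>max N1 N2. p n + q n = 0" by simp_all
  show ?thesis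
    unfolding peval_eq_sum[OF assms(1) N(1)] peval_eq_sum[OF assms(1) N(2)] peval_eq_sum[OF assms(1) N']
    by (simp add: module.scale_right_distrib[OF assms(1)] sum.distrib)
qed

lemma peval_diff:
  assumes "module S" "fin_supp p" "fin_supp q"
  shows "peval S (\<lambda>n. p n - q n) x = peval S p x - peval S q x"
proof -
  have "lin S uminus" using assms(1) by (simp add: lin_def module.scale_minus_right)
  then have "peval S (\<lambda>n. - q n) x = - peval S q x"
    using peval_linear_map[OF assms(1) _ assms(3)] by simp
  moreover have "fin_supp (\<lambda>n. - q n)" by (rule fin_supp_map[OF _ assms(3)]) simp
  ultimately have "peval S (\<lambda>n. p n + - q n) x = peval S p x - peval S q x"
    using peval_add[OF assms(1,2), of "\<lambda>n. - q n" x] by simp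
  then show ?thesis by simp
qed

lemma peval_shift:
  assumes "module S" "fin_supp p"
  shows "peval S (\<lambda>n. if n = 0 then 0 else p (n - 1)) x = S x (peval S p x)"
proof -
  interpret module S by fact
  obtain N where N: "\<forall>n\<ge>N. p n = 0" using assms(2) fin_supp_iff_bounded by blast
  then have N': "\<forall>n\<ge>Suc N. (if n = 0 then 0 else p (n - 1)) = 0" by auto
  have "(\<Sum>n<Suc N. S (x ^ n) (if n = 0 then 0 else p (n - 1))) = (\<Sum>n<N. S x (S (x ^ n) (p n)))"
    by (simp only: sum.lessThan_Suc_shift) simp
  then show ?thesis
    by (simp add: peval_eq_sum[OF assms(1) N] peval_eq_sum[OF assms(1) N'] scale_sum_right)
qed

lemma lin_peval:
  assumes "module S" "\<And>v. fin_supp (\<Phi> v)" "\<And>n. lin S (\<lambda>v. \<Phi> v n)"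
  shows "lin S (\<lambda>v. peval S (\<Phi> v) x)"
proof -
  have "\<Phi> (a + b) = (\<lambda>n. \<Phi> a n + \<Phi> b n)" "\<Phi> (S c a) = (\<lambda>n. S c (\<Phi> a n))" for a b c
    using assms(3) by (auto simp: lin_def)
  then show ?thesis
    unfolding lin_def by (simp add: peval_add[OF assms(1) assms(2,2)] peval_scale[OF assms(1,2)])
qed

lemma peval_in_subspace:
  assumes "module S" "csubspace S A" "\<And>n. p n \<in> A"
  shows "peval S p x \<in> A"
proof -
  interpret module S by fact
  have "subspace A" using assms(2) csubspace_iff_subspace[OF assms(1)] by simp
  then show ?thesis unfolding peval_def by (simp add: subspace_sum subspace_scale assms(3))
qed

lemma sum_powers_diff_factor:
  assumes "module S"
  shows "(\<Sum>n<Suc N. S (x ^ n) (p n)) - (\<Sum>n<Suc N. S (a ^ n) (p n))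
       = S (x - a) (\<Sum>i<N. S (x ^ i) (\<Sum>k = Suc i..N. S (a ^ (k - Suc i)) (p k)))"
proof -
  interpret module S by fact
  have "(\<Sum>n<Suc N. S (x ^ n) (p n)) - (\<Sum>n<Suc N. S (a ^ n) (p n))
      = (\<Sum>n<Suc N. S (x ^ n - a ^ n) (p n))"
    by (simp add: sum_subtractf scale_left_diff_distrib)
  also have "\<dots> = (\<Sum>n<Suc N. S (x - a) (\<Sum>i<n. S (a ^ (n - Suc i) * x ^ i) (p n)))"
    by (simp add: power_diff_sumr2 flip: scale_sum_left)
  also have "\<dots> = S (x - a) (\<Sum>i<N. \<Sum>n = Suc i..N. S (a ^ (n - Suc i) * x ^ i) (p n))"
    by (simp only: scale_sum_right[symmetric] lessThan_Suc_atMost sum.nested_swap')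
  also have "\<dots> = S (x - a) (\<Sum>i<N. S (x ^ i) (\<Sum>k = Suc i..N. S (a ^ (k - Suc i)) (p k)))"
    by (simp add: scale_sum_right mult.commute)
  finally show ?thesis .
qed

lemma sum_powers_eq_zero_imp_zero:
  fixes X :: "complex set"
  assumes "module S" "infinite X" "\<forall>x\<in>X. (\<Sum>n<N. S (x ^ n) (p n)) = 0"
  shows "\<forall>n<N. p n = 0"
  using assms(2,3)
proof (induction N arbitrary: p X)
  \<comment> \<open>\<open>P x - P a = (x - a) Q x\<close> with \<open>Q\<close> of lower degree vanishing on \<open>X - {a}\<close>; so \<open>P\<close> vanishes
      everywhere, \<open>p 0 = P 0 = 0\<close>, and \<open>P x / x\<close> vanishes on \<open>X - {0}\<close>.\<close>
  case 0
  then show ?case by simp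
next
  case (Suc N)
  interpret module S by fact
  define P where "P x = (\<Sum>n<Suc N. S (x ^ n) (p n))" for x
  obtain a where a: "a \<in> X" using Suc.prems(1) by (metis finite.emptyI ex_in_conv)
  define q where "q i = (\<Sum>k = Suc i..N. S (a ^ (k - Suc i)) (p k))" for i
  have factor: "P x = S (x - a) (\<Sum>i<N. S (x ^ i) (q i))" for x
    using sum_powers_diff_factor[OF assms(1), where N=N and x=x and p=p and a=a] Suc.prems(2) a
    unfolding P_def q_def by simp
  have "(\<Sum>i<N. S (x ^ i) (q i)) = 0" if "x \<in> X - {a}" for x
  proof -
    have "S (x - a) (\<Sum>i<N. S (x ^ i) (q i)) = 0" using factor[of x] Suc.prems(2) that P_def by simp
    then have "S (1 / (x - a)) (S (x - a) (\<Sum>i<N. S (x ^ i) (q i))) = 0" by simp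
    then show ?thesis using that by simp
  qed
  then have "\<forall>i<N. q i = 0" using Suc.IH[of "X - {a}" q] Suc.prems(1) by simp
  then have P_zero: "P x = 0" for x by (simp add: factor)
  have p0: "p 0 = 0" using P_zero[of 0] unfolding P_def
    by (simp add: sum.lessThan_Suc_shift del: sum.lessThan_Suc)
  have "(\<Sum>i<N. S (x ^ i) (p (Suc i))) = 0" if "x \<in> X - {0}" for x
  proof -
    have "P x = S x (\<Sum>i<N. S (x ^ i) (p (Suc i)))" unfolding P_def
      by (simp add: sum.lessThan_Suc_shift p0 scale_sum_right del: sum.lessThan_Suc)
    then have "S (1 / x) (S x (\<Sum>i<N. S (x ^ i) (p (Suc i)))) = 0" using P_zero[of x] by simp
    then show ?thesis using that by simp
  qed
  then have "\<forall>i<N. p (Suc i) = 0" using Suc.IH[of "X - {0}" "\<lambda>i. p (Suc i)"] Suc.prems(1) by simp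
  then show ?case using p0 by (auto simp: less_Suc_eq_0_disj)
qed

lemma peval_eq_zero_imp_zero:
  assumes "module S" "fin_supp p" "\<And>x. peval S p x = 0"
  shows "p n = 0"
proof -
  obtain N where N: "\<forall>n\<ge>N. p n = 0" using assms(2) fin_supp_iff_bounded by blast
  have "\<forall>n<N. p n = 0"
    by (rule sum_powers_eq_zero_imp_zero[OF assms(1) infinite_UNIV_char_0])
       (use assms(3) peval_eq_sum[OF assms(1) N] in auto)
  with N show ?thesis by (meson not_le)
qed

definition fin_supp2 :: "(nat \<Rightarrow> nat \<Rightarrow> 'a::zero) \<Rightarrow> bool" where
  "fin_supp2 w \<longleftrightarrow> (\<exists>N. \<forall>i j. N \<le> i \<or> N \<le> j \<longrightarrow> w i j = 0)"

definition fin_supp3 :: "(nat \<Rightarrow> nat \<Rightarrow> nat \<Rightarrow> 'a::zero) \<Rightarrow> bool" where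
  "fin_supp3 w \<longleftrightarrow> (\<exists>N. \<forall>i j k. N \<le> i \<or> N \<le> j \<or> N \<le> k \<longrightarrow> w i j k = 0)"

definition peval2 :: "(complex \<Rightarrow> 'b \<Rightarrow> 'b) \<Rightarrow> (nat \<Rightarrow> nat \<Rightarrow> 'b::ab_group_add) \<Rightarrow> complex \<Rightarrow> complex \<Rightarrow> 'b"
  where "peval2 S w x y = peval S (\<lambda>i. peval S (w i) y) x"

definition peval3 ::
    "(complex \<Rightarrow> 'b \<Rightarrow> 'b) \<Rightarrow> (nat \<Rightarrow> nat \<Rightarrow> nat \<Rightarrow> 'b::ab_group_add) \<Rightarrow> complex \<Rightarrow> complex \<Rightarrow> complex \<Rightarrow> 'b"
  where "peval3 S w x y z = peval S (\<lambda>i. peval2 S (w i) y z) x"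

lemma common_bound:
  fixes P :: "'a \<Rightarrow> nat \<Rightarrow> bool"
  assumes "finite A" "\<forall>a\<in>A. \<exists>N. P a N" "\<And>a N M. P a N \<Longrightarrow> N \<le> M \<Longrightarrow> P a M"
  shows "\<exists>M. \<forall>a\<in>A. P a M"
proof -
  obtain N where N: "\<forall>a\<in>A. P a (N a)" using assms(2) by metis
  obtain M where "\<forall>n\<in>N ` A. n \<le> M"
    using assms(1) finite_nat_set_iff_bounded_le by blast
  then show ?thesis using N assms(3) by blast
qed

lemma fin_supp2_row: "fin_supp2 w \<Longrightarrow> fin_supp (w i)"
  unfolding fin_supp2_def fin_supp_iff_bounded by blast

lemma fin_supp2_peval:
  assumes "fin_supp2 w"
  shows "fin_supp (\<lambda>i. peval S (w i) y)"
proof -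
  obtain N where "\<forall>i j. N \<le> i \<or> N \<le> j \<longrightarrow> w i j = 0" using assms fin_supp2_def by blast
  then have "\<forall>i\<ge>N. w i = (\<lambda>j. 0)" by auto
  then have "\<forall>i\<ge>N. peval S (w i) y = 0" by (simp add: peval_def)
  then show ?thesis unfolding fin_supp_iff_bounded by blast
qed

lemma fin_supp2_combine:
  assumes "T 0 0 = 0" "fin_supp2 v" "fin_supp2 w"
  shows "fin_supp2 (\<lambda>i j. T (v i j) (w i j))"
proof -
  obtain N M where "\<forall>i j. N \<le> i \<or> N \<le> j \<longrightarrow> v i j = 0" "\<forall>i j. M \<le> i \<or> M \<le> j \<longrightarrow> w i j = 0"
    using assms(2,3) unfolding fin_supp2_def by blast
  then have "\<forall>i j. max N M \<le> i \<or> max N M \<le> j \<longrightarrow> T (v i j) (w i j) = 0"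
    using assms(1) by auto
  then show ?thesis unfolding fin_supp2_def by blast
qed

lemma fin_supp2_map: "T 0 = 0 \<Longrightarrow> fin_supp2 w \<Longrightarrow> fin_supp2 (\<lambda>i j. T (w i j))"
  using fin_supp2_combine[of "\<lambda>a b. T a" w w] by simp

lemma fin_supp2_swap: "fin_supp2 w \<Longrightarrow> fin_supp2 (\<lambda>i j. w j i)"
  unfolding fin_supp2_def by blast

lemma fin_supp2_shift_right:
  assumes "fin_supp2 w"
  shows "fin_supp2 (\<lambda>i j. if j = 0 then 0 else w i (j - 1))"
proof -
  obtain N where "\<forall>i j. N \<le> i \<or> N \<le> j \<longrightarrow> w i j = 0"
    using assms unfolding fin_supp2_def by blast
  then have "\<forall>i j. Suc N \<le> i \<or> Suc N \<le> j \<longrightarrow> (if j = 0 then 0 else w i (j - 1)) = 0"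
    by auto
  then show ?thesis unfolding fin_supp2_def by blast
qed

lemma fin_supp2_compose:
  assumes "\<And>n. \<Phi> 0 n = 0" "\<And>v. fin_supp (\<Phi> v)" "fin_supp u"
  shows "fin_supp2 (\<lambda>m n. \<Phi> (u m) n)"
proof -
  obtain N where N: "\<forall>m\<ge>N. u m = 0" using assms(3) fin_supp_iff_bounded by blast
  obtain M where "\<forall>m\<in>{..<N}. \<forall>n\<ge>M. \<Phi> (u m) n = 0"
    by (rule exE[OF common_bound[of "{..<N}" "\<lambda>m M. \<forall>n\<ge>M. \<Phi> (u m) n = 0"]])
       (use assms(2) fin_supp_iff_bounded in auto)
  then have "\<forall>m n. max N M \<le> m \<or> max N M \<le> n \<longrightarrow> \<Phi> (u m) n = 0"
    using N assms(1) by (metis lessThan_iff max.bounded_iff not_le)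
  then show ?thesis unfolding fin_supp2_def by blast
qed

lemma fin_supp3_slice: "fin_supp3 w \<Longrightarrow> fin_supp2 (w i)"
  unfolding fin_supp3_def fin_supp2_def by blast

lemma fin_supp3_peval2:
  assumes "fin_supp3 w"
  shows "fin_supp (\<lambda>i. peval2 S (w i) y z)"
proof -
  obtain N where "\<forall>i j k. N \<le> i \<or> N \<le> j \<or> N \<le> k \<longrightarrow> w i j k = 0"
    using assms fin_supp3_def by blast
  then have "\<forall>i\<ge>N. w i = (\<lambda>j k. 0)" by (auto simp: fun_eq_iff)
  then have "\<forall>i\<ge>N. peval2 S (w i) y z = 0" by (simp add: peval2_def peval_def)
  then show ?thesis unfolding fin_supp_iff_bounded by blast
qed

lemma fin_supp3_combine:
  assumes "T 0 0 = 0" "fin_supp3 v" "fin_supp3 w"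
  shows "fin_supp3 (\<lambda>i j k. T (v i j k) (w i j k))"
proof -
  obtain N M where "\<forall>i j k. N \<le> i \<or> N \<le> j \<or> N \<le> k \<longrightarrow> v i j k = 0"
      "\<forall>i j k. M \<le> i \<or> M \<le> j \<or> M \<le> k \<longrightarrow> w i j k = 0"
    using assms(2,3) unfolding fin_supp3_def by blast
  then have "\<forall>i j k. max N M \<le> i \<or> max N M \<le> j \<or> max N M \<le> k \<longrightarrow> T (v i j k) (w i j k) = 0"
    using assms(1) by auto
  then show ?thesis unfolding fin_supp3_def by blast
qed

lemma fin_supp3_map: "T 0 = 0 \<Longrightarrow> fin_supp3 w \<Longrightarrow> fin_supp3 (\<lambda>i j k. T (w i j k))"
  using fin_supp3_combine[of "\<lambda>a b. T a" w w] by simp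

lemma fin_supp3_compose2:
  assumes "\<And>n. \<Phi> 0 n = 0" "\<And>v. fin_supp (\<Phi> v)" "fin_supp2 u"
  shows "fin_supp3 (\<lambda>i j n. \<Phi> (u i j) n)"
proof -
  obtain N where N: "\<forall>i j. N \<le> i \<or> N \<le> j \<longrightarrow> u i j = 0" using assms(3) fin_supp2_def by blast
  obtain M where M: "\<forall>(i, j)\<in>{..<N} \<times> {..<N}. \<forall>n\<ge>M. \<Phi> (u i j) n = 0"
    by (rule exE[OF common_bound[of "{..<N} \<times> {..<N}" "\<lambda>(i, j) M. \<forall>n\<ge>M. \<Phi> (u i j) n = 0"]])
       (use assms(2) fin_supp_iff_bounded in auto)
  have "\<Phi> (u i j) n = 0" if "max N M \<le> i \<or> max N M \<le> j \<or> max N M \<le> n" for i j n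
  proof (cases "i < N \<and> j < N")
    case True
    then show ?thesis using M that by auto
  next
    case False
    then have "u i j = 0" using N by (meson not_less)
    then show ?thesis using assms(1) by simp
  qed
  then show ?thesis unfolding fin_supp3_def by blast
qed

lemma fin_supp3_compose:
  assumes "\<And>i j. \<Phi> 0 i j = 0" "\<And>v. fin_supp2 (\<Phi> v)" "fin_supp u"
  shows "fin_supp3 (\<lambda>i j n. \<Phi> (u n) i j)"
proof -
  obtain N where N: "\<forall>n\<ge>N. u n = 0" using assms(3) fin_supp_iff_bounded by blast
  obtain M where M: "\<forall>n\<in>{..<N}. \<forall>i j. M \<le> i \<or> M \<le> j \<longrightarrow> \<Phi> (u n) i j = 0"
    by (rule exE[OF common_bound[of "{..<N}" "\<lambda>n M. \<forall>i j. M \<le> i \<or> M \<le> j \<longrightarrow> \<Phi> (u n) i j = 0"]])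
       (use assms(2) in \<open>auto simp: fin_supp2_def\<close>)
  have "\<Phi> (u n) i j = 0" if "max N M \<le> i \<or> max N M \<le> j \<or> max N M \<le> n" for i j n
  proof (cases "n < N")
    case True
    then show ?thesis using M that by auto
  next
    case False
    then show ?thesis using N assms(1) by (simp add: not_less)
  qed
  then show ?thesis unfolding fin_supp3_def by blast
qed

lemma peval2_add:
  assumes "module S" "fin_supp2 v" "fin_supp2 w"
  shows "peval2 S (\<lambda>i j. v i j + w i j) x y = peval2 S v x y + peval2 S w x y"
  unfolding peval2_def
  using peval_add[OF assms(1) fin_supp2_row[OF assms(2)] fin_supp2_row[OF assms(3)]]
    peval_add[OF assms(1) fin_supp2_peval[OF assms(2)] fin_supp2_peval[OF assms(3)]]
  by simp

lemma peval2_diff: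
  assumes "module S" "fin_supp2 v" "fin_supp2 w"
  shows "peval2 S (\<lambda>i j. v i j - w i j) x y = peval2 S v x y - peval2 S w x y"
  unfolding peval2_def
  using peval_diff[OF assms(1) fin_supp2_row[OF assms(2)] fin_supp2_row[OF assms(3)]]
    peval_diff[OF assms(1) fin_supp2_peval[OF assms(2)] fin_supp2_peval[OF assms(3)]]
  by simp

lemma peval2_linear_map:
  assumes "module S" "lin S T" "fin_supp2 w"
  shows "T (peval2 S w x y) = peval2 S (\<lambda>i j. T (w i j)) x y"
  unfolding peval2_def
  using peval_linear_map[OF assms(1,2) fin_supp2_peval[OF assms(3)]]
    peval_linear_map[OF assms(1,2) fin_supp2_row[OF assms(3)]]
  by simp

lemma peval2_shift_right:
  assumes "module S" "fin_supp2 w"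
  shows "peval2 S (\<lambda>i j. if j = 0 then 0 else w i (j - 1)) x y = S y (peval2 S w x y)"
  unfolding peval2_def
  using peval_shift[OF assms(1) fin_supp2_row[OF assms(2)]]
    peval_scale[OF assms(1) fin_supp2_peval[OF assms(2)]]
  by simp

lemma peval2_eq_zero_imp_zero:
  assumes "module S" "fin_supp2 w" "\<And>x y. peval2 S w x y = 0"
  shows "w i j = 0"
proof -
  have "peval S (w i) y = 0" for y
    using peval_eq_zero_imp_zero[OF assms(1) fin_supp2_peval[OF assms(2)]] assms(3)
    unfolding peval2_def by blast
  then show ?thesis using peval_eq_zero_imp_zero[OF assms(1) fin_supp2_row[OF assms(2)]] by blast
qed

lemma peval2_eqI:
  assumes "module S" "fin_supp2 v" "fin_supp2 w" "\<And>x y. peval2 S v x y = peval2 S w x y"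
  shows "v = w"
proof -
  have "v i j - w i j = 0" for i j
    by (rule peval2_eq_zero_imp_zero[OF assms(1) fin_supp2_combine[OF _ assms(2,3)]])
       (simp_all add: peval2_diff[OF assms(1-3)] assms(4))
  then show ?thesis by (simp add: fun_eq_iff)
qed

lemma peval3_add:
  assumes "module S" "fin_supp3 v" "fin_supp3 w"
  shows "peval3 S (\<lambda>i j k. v i j k + w i j k) x y z = peval3 S v x y z + peval3 S w x y z"
  unfolding peval3_def
  using peval2_add[OF assms(1) fin_supp3_slice[OF assms(2)] fin_supp3_slice[OF assms(3)]]
    peval_add[OF assms(1) fin_supp3_peval2[OF assms(2)] fin_supp3_peval2[OF assms(3)]]
  by simp

lemma peval3_diff:
  assumes "module S" "fin_supp3 v" "fin_supp3 w"
  shows "peval3 S (\<lambda>i j k. v i j k - w i j k) x y z = peval3 S v x y z - peval3 S w x y z"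
  unfolding peval3_def
  using peval2_diff[OF assms(1) fin_supp3_slice[OF assms(2)] fin_supp3_slice[OF assms(3)]]
    peval_diff[OF assms(1) fin_supp3_peval2[OF assms(2)] fin_supp3_peval2[OF assms(3)]]
  by simp

lemma peval3_linear_map:
  assumes "module S" "lin S T" "fin_supp3 w"
  shows "T (peval3 S w x y z) = peval3 S (\<lambda>i j k. T (w i j k)) x y z"
  unfolding peval3_def
  using peval_linear_map[OF assms(1,2) fin_supp3_peval2[OF assms(3)]]
    peval2_linear_map[OF assms(1,2) fin_supp3_slice[OF assms(3)]]
  by simp

lemma peval3_eq_zero_imp_zero:
  assumes "module S" "fin_supp3 w" "\<And>x y z. peval3 S w x y z = 0"
  shows "w i j k = 0"
proof -
  have "peval2 S (w i) y z = 0" for y z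
    using peval_eq_zero_imp_zero[OF assms(1) fin_supp3_peval2[OF assms(2)]] assms(3)
    unfolding peval3_def by blast
  then show ?thesis using peval2_eq_zero_imp_zero[OF assms(1) fin_supp3_slice[OF assms(2)]] by blast
qed

lemma peval3_eqI:
  assumes "module S" "fin_supp3 v" "fin_supp3 w" "\<And>x y z. peval3 S v x y z = peval3 S w x y z"
  shows "v = w"
proof -
  have "v i j k - w i j k = 0" for i j k
    by (rule peval3_eq_zero_imp_zero[OF assms(1) fin_supp3_combine[OF _ assms(2,3)]])
       (simp_all add: peval3_diff[OF assms(1-3)] assms(4))
  then show ?thesis by (simp add: fun_eq_iff)
qed

lemma peval3_compose:
  assumes "module S" "\<And>i j. lin S (\<lambda>v. \<Phi> v i j)" "fin_supp u"
  shows "peval3 S (\<lambda>i j k. \<Phi> (u k) i j) x y z = peval2 S (\<Phi> (peval S u z)) x y"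
  unfolding peval3_def peval2_def peval_linear_map[OF assms] ..

lemma peval2_eq_sum:
  assumes "module S" "\<forall>i j. N \<le> i \<or> N \<le> j \<longrightarrow> w i j = 0"
  shows "peval2 S w x y = (\<Sum>i<N. \<Sum>j<N. S (x ^ i * y ^ j) (w i j))"
proof -
  interpret module S by fact
  have row: "\<forall>j\<ge>N. w i j = 0" for i using assms(2) by blast
  have "\<forall>i\<ge>N. w i = (\<lambda>j. 0)" using assms(2) by auto
  then have col: "\<forall>i\<ge>N. peval S (w i) y = 0" by (simp add: peval_def)
  have "peval2 S w x y = (\<Sum>i<N. S (x ^ i) (peval S (w i) y))"
    unfolding peval2_def by (rule peval_eq_sum[OF assms(1) col])
  also have "\<dots> = (\<Sum>i<N. \<Sum>j<N. S (x ^ i * y ^ j) (w i j))"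
    by (simp add: peval_eq_sum[OF assms(1) row] scale_sum_right)
  finally show ?thesis .
qed

section \<open>Shearing the second variable\<close>

definition shear_coeffs ::
    "(complex \<Rightarrow> 'b \<Rightarrow> 'b) \<Rightarrow> complex \<Rightarrow> (nat \<Rightarrow> nat \<Rightarrow> 'b::ab_group_add) \<Rightarrow> nat \<Rightarrow> nat \<Rightarrow> 'b" where
  "shear_coeffs S c V i j =
     (\<Sum>p\<le>i. S (c ^ (i - p) * of_nat ((i - p + j) choose (i - p))) (V p (i - p + j)))"

lemma shift2_eq_shear_coeffs: "shift2 S w = shear_coeffs S 1 w"
  unfolding shift2_def shear_coeffs_def fun_eq_iff
proof (intro allI sum.cong refl)
  fix i j n :: nat
  show "S (of_nat ((i - n + j) choose j)) (w n (i - n + j)) =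
        S (1 ^ (i - n) * of_nat ((i - n + j) choose (i - n))) (w n (i - n + j))"
    using binomial_symmetric[of j "i - n + j"] by simp
qed

lemma shear_coeffs_eq_zero:
  assumes "module S" "\<forall>p m. N \<le> p \<or> N \<le> m \<longrightarrow> V p m = 0" "2 * N \<le> i \<or> 2 * N \<le> j"
  shows "shear_coeffs S c V i j = 0"
proof -
  have "V p (i - p + j) = 0" if "p \<le> i" for p
  proof -
    have "N \<le> p \<or> N \<le> i - p + j" using assms(3) that by auto
    then show ?thesis using assms(2) by blast
  qed
  then show ?thesis unfolding shear_coeffs_def by (simp add: module.scale_zero_right[OF assms(1)])
qed

lemma fin_supp2_shear_coeffs:
  assumes "module S" "fin_supp2 V"
  shows "fin_supp2 (shear_coeffs S c V)"
  using assms shear_coeffs_eq_zero unfolding fin_supp2_def by blast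

lemma fin_supp3_shear_coeffs:
  assumes "module S" "fin_supp3 w"
  shows "fin_supp3 (\<lambda>i. shear_coeffs S c (w i))"
proof -
  obtain N where N: "\<forall>i j k. N \<le> i \<or> N \<le> j \<or> N \<le> k \<longrightarrow> w i j k = 0"
    using assms(2) fin_supp3_def by blast
  have "shear_coeffs S c (w i) j k = 0" if "2 * N \<le> i \<or> 2 * N \<le> j \<or> 2 * N \<le> k" for i j k
  proof (cases "N \<le> i")
    case True
    then show ?thesis using N by (simp add: shear_coeffs_def module.scale_zero_right[OF assms(1)])
  next
    case False
    then show ?thesis using that N by (intro shear_coeffs_eq_zero[OF assms(1)]) auto
  qed
  then show ?thesis unfolding fin_supp3_def by blast
qed

lemma shear_coeffs_linear_map:
  "lin S T \<Longrightarrow> T (shear_coeffs S c V i j) = shear_coeffs S c (\<lambda>p m. T (V p m)) i j"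
  unfolding shear_coeffs_def by (simp add: lin_sum lin_scale_comm)

lemma lin_shear_coeffs:
  assumes "module S" "\<And>p m. lin S (\<lambda>a. V a p m)"
  shows "lin S (\<lambda>a. shear_coeffs S c (V a) i j)"
  unfolding shear_coeffs_def
  by (intro lin_sum_fun[OF assms(1)] lin_comp[OF lin_scale[OF assms(1)] assms(2)])

lemma shear_coeffs_in_subspace:
  assumes "module S" "csubspace S A" "\<And>p m. V p m \<in> A"
  shows "shear_coeffs S c V i j \<in> A"
proof -
  interpret module S by fact
  have "subspace A" using assms(2) csubspace_iff_subspace[OF assms(1)] by simp
  then show ?thesis unfolding shear_coeffs_def by (simp add: subspace_sum subspace_scale assms(3))
qed

text \<open>Both sides sum \<open>G p a j\<close> over \<open>p < N\<close>, \<open>a + j < N\<close>: the left one indexed by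
  \<open>i = p + a\<close>, the right one by \<open>m = a + j\<close>.\<close>

lemma sum_shear_reindex:
  fixes G :: "nat \<Rightarrow> nat \<Rightarrow> nat \<Rightarrow> 'b::comm_monoid_add"
  assumes "\<And>p a j. G p a j \<noteq> 0 \<Longrightarrow> p < N \<and> a + j < N"
  shows "(\<Sum>i<2 * N. \<Sum>j<2 * N. \<Sum>p\<le>i. G p (i - p) j) = (\<Sum>p<N. \<Sum>m<N. \<Sum>k\<le>m. G p (m - k) k)"
proof -
  define A where "A = (SIGMA i:{..<2 * N}. SIGMA j:{..<2 * N}. {..i})"
  define B where "B = (SIGMA p:{..<N}. SIGMA m:{..<N}. {..m})"
  define h where "h = (\<lambda>(p :: nat, m :: nat, k :: nat). (p + (m - k), k, p))"
  have "inj_on h B" unfolding inj_on_def h_def B_def by auto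
  have "(\<Sum>p<N. \<Sum>m<N. \<Sum>k\<le>m. G p (m - k) k) = (\<Sum>(p, m, k)\<in>B. G p (m - k) k)"
    unfolding B_def by (simp add: sum.Sigma)
  also have "\<dots> = (\<Sum>(i, j, p)\<in>h ` B. G p (i - p) j)"
    by (subst sum.reindex[OF \<open>inj_on h B\<close>]) (auto simp: h_def B_def intro!: sum.cong)
  also have "\<dots> = (\<Sum>(i, j, p)\<in>A. G p (i - p) j)"
  proof (rule sum.mono_neutral_left)
    show "finite A" unfolding A_def by auto
    show "h ` B \<subseteq> A" unfolding A_def B_def h_def by auto
    show "\<forall>x\<in>A - h ` B. (case x of (i, j, p) \<Rightarrow> G p (i - p) j) = 0"
    proof (clarify)
      fix i j p assume ijp: "(i, j, p) \<in> A" "(i, j, p) \<notin> h ` B"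
      show "G p (i - p) j = 0"
      proof (rule ccontr)
        assume "G p (i - p) j \<noteq> 0"
        then have "p < N" "i - p + j < N" using assms by blast+
        then have "(p, i - p + j, j) \<in> B" "h (p, i - p + j, j) = (i, j, p)"
          using ijp(1) unfolding A_def B_def h_def by auto
        then show False using ijp(2) by (metis image_eqI)
      qed
    qed
  qed
  also have "\<dots> = (\<Sum>i<2 * N. \<Sum>j<2 * N. \<Sum>p\<le>i. G p (i - p) j)"
    unfolding A_def by (simp add: sum.Sigma)
  finally show ?thesis by simp
qed

lemma peval2_shear_coeffs:
  assumes "module S" "fin_supp2 V"
  shows "peval2 S (shear_coeffs S c V) x y = peval2 S V x (y + c * x)"
proof -
  interpret module S by fact
  obtain N where N: "\<forall>p m. N \<le> p \<or> N \<le> m \<longrightarrow> V p m = 0"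
    using assms(2) fin_supp2_def by blast
  have N2: "\<forall>i j. 2 * N \<le> i \<or> 2 * N \<le> j \<longrightarrow> shear_coeffs S c V i j = 0"
    using shear_coeffs_eq_zero[OF assms(1) N] by blast
  define G where "G p a j = S (x ^ (p + a) * y ^ j * c ^ a * of_nat ((a + j) choose a)) (V p (a + j))"
    for p a j
  have G_supp: "G p a j \<noteq> 0 \<Longrightarrow> p < N \<and> a + j < N" for p a j
    using N unfolding G_def by (metis not_le scale_zero_right)
  have "peval2 S (shear_coeffs S c V) x y = (\<Sum>i<2 * N. \<Sum>j<2 * N. \<Sum>p\<le>i. G p (i - p) j)"
    unfolding peval2_eq_sum[OF assms(1) N2] shear_coeffs_def G_def
    by (intro sum.cong refl) (simp add: scale_sum_right mult.assoc flip: power_add)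
  also have "\<dots> = (\<Sum>p<N. \<Sum>m<N. \<Sum>k\<le>m. G p (m - k) k)"
    by (rule sum_shear_reindex[OF G_supp])
  also have "\<dots> = (\<Sum>p<N. \<Sum>m<N. S (x ^ p * (y + c * x) ^ m) (V p m))"
  proof (intro sum.cong refl)
    fix p m
    have "G p (m - k) k = S (x ^ p * (of_nat (m choose k) * y ^ k * (c * x) ^ (m - k))) (V p m)"
      if "k \<le> m" for k
      using that unfolding G_def power_add binomial_symmetric[OF that]
      by (simp add: power_mult_distrib mult_ac)
    then show "(\<Sum>k\<le>m. G p (m - k) k) = S (x ^ p * (y + c * x) ^ m) (V p m)"
      by (simp add: binomial_ring[of y "c * x"] sum_distrib_left scale_sum_left)
  qed
  also have "\<dots> = peval2 S V x (y + c * x)"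
    by (rule peval2_eq_sum[OF assms(1) N, symmetric])
  finally show ?thesis .
qed

section \<open>Derivations evaluated at a point\<close>

definition ab_pow :: "('r::ab_group_add) lcsa \<Rightarrow> nat \<Rightarrow> nat \<Rightarrow> 'r \<Rightarrow> 'r" where
  "ab_pow R k l = (alph R ^^ k) \<circ> (bet R ^^ l)"

lemma ab_pow_commute:
  assumes "\<And>a. F (alph R a) = alph R (F a)" "\<And>a. F (bet R a) = bet R (F a)"
  shows "F (ab_pow R k l a) = ab_pow R k l (F a)"
proof -
  have "F ((alph R ^^ k) b) = (alph R ^^ k) (F b)" for b by (induction k) (simp_all add: assms(1))
  moreover have "F ((bet R ^^ l) b) = (bet R ^^ l) (F b)" for b by (induction l) (simp_all add: assms(2))
  ultimately show ?thesis unfolding ab_pow_def by simp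
qed

definition br_at :: "('r::ab_group_add) lcsa \<Rightarrow> complex \<Rightarrow> 'r \<Rightarrow> 'r \<Rightarrow> 'r" where
  "br_at R z a b = peval (sc R) (br R a b) z"

text \<open>What an \<open>\<alpha>\<^sup>k\<beta>\<^sup>l\<close>-derivation \<open>f\<^sub>\<lambda>\<close> becomes when \<open>\<lambda>\<close> is specialised to \<open>x\<close>.\<close>

definition hder_at :: "('r::ab_group_add) lcsa \<Rightarrow> nat \<Rightarrow> nat \<Rightarrow> bool \<Rightarrow> complex \<Rightarrow> ('r \<Rightarrow> 'r) \<Rightarrow> bool" where
  "hder_at R k l pF x F \<longleftrightarrow>
     lin (sc R) F \<and>
     (\<forall>p a. a \<in> Rg R p \<longrightarrow> F a \<in> Rg R (p \<noteq> pF)) \<and>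
     (\<forall>a. F (alph R a) = alph R (F a)) \<and> (\<forall>a. F (bet R a) = bet R (F a)) \<and>
     (\<forall>a. F (D R a) = D R (F a) + sc R x (F a)) \<and>
     (\<forall>p q a b z. a \<in> Rg R p \<longrightarrow> b \<in> Rg R q \<longrightarrow>
        F (br_at R z a b) = br_at R (x + z) (F a) (ab_pow R k l b)
          + sc R (sgn2 (p \<and> pF)) (br_at R z (ab_pow R k l a) (F b)))"

lemma conf_lin_fin_supp: "conf_lin R pf f \<Longrightarrow> fin_supp (f a)"
  and conf_lin_lin: "conf_lin R pf f \<Longrightarrow> lin (sc R) (\<lambda>a. f a n)"
  and conf_lin_D: "conf_lin R pf f \<Longrightarrow> f (D R a) n = D R (f a n) + (if n = 0 then 0 else f a (n - 1))"
  and conf_lin_Rg: "conf_lin R pf f \<Longrightarrow> a \<in> Rg R p \<Longrightarrow> f a n \<in> Rg R (p \<noteq> pf)"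
  unfolding conf_lin_def by blast+

lemma hder_conf_lin: "hder R k l pf f \<Longrightarrow> conf_lin R pf f"
  and hder_alph: "hder R k l pf f \<Longrightarrow> f (alph R a) n = alph R (f a n)"
  and hder_bet: "hder R k l pf f \<Longrightarrow> f (bet R a) n = bet R (f a n)"
  unfolding hder_def by blast+

lemma hder_br:
  "hder R k l pf f \<Longrightarrow> a \<in> Rg R p \<Longrightarrow> b \<in> Rg R q \<Longrightarrow>
   f (br R a b j) i = shear_coeffs (sc R) 1 (\<lambda>n m. br R (f a n) (ab_pow R k l b) m) i j
     + sc R (sgn2 (p \<and> pf)) (br R (ab_pow R k l a) (f b i) j)"
  unfolding hder_def ab_pow_def shift2_eq_shear_coeffs by blast

lemma hder_at_lin: "hder_at R k l pF x F \<Longrightarrow> lin (sc R) F"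
  and hder_at_Rg: "hder_at R k l pF x F \<Longrightarrow> a \<in> Rg R p \<Longrightarrow> F a \<in> Rg R (p \<noteq> pF)"
  and hder_at_alph: "hder_at R k l pF x F \<Longrightarrow> F (alph R a) = alph R (F a)"
  and hder_at_bet: "hder_at R k l pF x F \<Longrightarrow> F (bet R a) = bet R (F a)"
  and hder_at_D: "hder_at R k l pF x F \<Longrightarrow> F (D R a) = D R (F a) + sc R x (F a)"
  and hder_at_br: "hder_at R k l pF x F \<Longrightarrow> a \<in> Rg R p \<Longrightarrow> b \<in> Rg R q \<Longrightarrow>
     F (br_at R z a b) = br_at R (x + z) (F a) (ab_pow R k l b)
       + sc R (sgn2 (p \<and> pF)) (br_at R z (ab_pow R k l a) (F b))"
  unfolding hder_at_def by blast+

lemma hder_at_ab_pow: "hder_at R k l pF x F \<Longrightarrow> F (ab_pow R k' l' a) = ab_pow R k' l' (F a)"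
  by (rule ab_pow_commute) (simp_all add: hder_at_alph hder_at_bet)

locale lcsa_structure =
  fixes R :: "('r::ab_group_add) lcsa"
  assumes module_sc: "module (sc R)"
    and csubspace_Rg: "csubspace (sc R) (Rg R p)"
    and lin_D: "lin (sc R) (D R)"
    and lin_alph: "lin (sc R) (alph R)"
    and lin_bet: "lin (sc R) (bet R)"
    and alph_Rg: "a \<in> Rg R p \<Longrightarrow> alph R a \<in> Rg R p"
    and bet_Rg: "a \<in> Rg R p \<Longrightarrow> bet R a \<in> Rg R p"
    and alph_bet_commute: "alph R (bet R a) = bet R (alph R a)"
    and fin_supp_br: "fin_supp (br R a b)"
    and lin_br_left: "lin (sc R) (\<lambda>a. br R a b n)"
    and lin_br_right: "lin (sc R) (\<lambda>b. br R a b n)"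

lemma BiHom_LCSA_imp_lcsa_structure:
  assumes "BiHom_LCSA R"
  shows "lcsa_structure R"
proof -
  have "module (sc R) \<and> csubspace (sc R) (Rg R False) \<and> csubspace (sc R) (Rg R True) \<and>
      lin (sc R) (D R) \<and> lin (sc R) (alph R) \<and> lin (sc R) (bet R) \<and>
      (\<forall>p. \<forall>a\<in>Rg R p. alph R a \<in> Rg R p \<and> bet R a \<in> Rg R p) \<and>
      (\<forall>a. alph R (bet R a) = bet R (alph R a)) \<and> (\<forall>a b. fin_supp (br R a b)) \<and>
      (\<forall>b n. lin (sc R) (\<lambda>a. br R a b n)) \<and> (\<forall>a n. lin (sc R) (\<lambda>b. br R a b n))"
    using assms unfolding BiHom_LCSA_def by (elim conjE) (intro conjI; assumption)
  moreover from this have "csubspace (sc R) (Rg R p)" for p by (cases p) simp_all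
  ultimately show ?thesis unfolding lcsa_structure_def by simp
qed

context lcsa_structure
begin

lemma Rg_diff_scale: "u \<in> Rg R p \<Longrightarrow> v \<in> Rg R p \<Longrightarrow> u - sc R c v \<in> Rg R p"
proof -
  interpret module "sc R" by (rule module_sc)
  have "subspace (Rg R p)" using csubspace_Rg csubspace_iff_subspace[OF module_sc] by blast
  then show "u \<in> Rg R p \<Longrightarrow> v \<in> Rg R p \<Longrightarrow> u - sc R c v \<in> Rg R p"
    by (simp add: subspace_diff subspace_scale)
qed

lemma ab_pow_Rg: "a \<in> Rg R p \<Longrightarrow> ab_pow R k l a \<in> Rg R p"
proof -
  have "(alph R ^^ n) b \<in> Rg R p" if "b \<in> Rg R p" for n b
    using that by (induction n) (simp_all add: alph_Rg)
  moreover have "(bet R ^^ n) b \<in> Rg R p" if "b \<in> Rg R p" for n b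
    using that by (induction n) (simp_all add: bet_Rg)
  ultimately show "a \<in> Rg R p \<Longrightarrow> ab_pow R k l a \<in> Rg R p" unfolding ab_pow_def by simp
qed

lemma ab_pow_ab_pow: "ab_pow R k l (ab_pow R k' l' a) = ab_pow R (k + k') (l + l') a"
  unfolding ab_pow_def
  by (simp add: funpow_add funpow_commute_funpow[of "alph R" "bet R", OF alph_bet_commute])

lemma lin_br_at_left: "lin (sc R) (\<lambda>a. br_at R z a b)"
  and lin_br_at_right: "lin (sc R) (\<lambda>b. br_at R z a b)"
  unfolding br_at_def by (intro lin_peval module_sc fin_supp_br lin_br_left lin_br_right)+

lemma peval2_br_left:
  assumes "fin_supp \<phi>"
  shows "peval2 (sc R) (\<lambda>n m. br R (\<phi> n) b m) y z = br_at R z (peval (sc R) \<phi> y) b"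
  unfolding peval2_def br_at_def[symmetric]
  by (rule peval_linear_map[OF module_sc lin_br_at_left assms, symmetric])

lemma peval2_br_right:
  assumes "fin_supp \<phi>"
  shows "peval2 (sc R) (\<lambda>n m. br R a (\<phi> n) m) y z = br_at R z a (peval (sc R) \<phi> y)"
  unfolding peval2_def br_at_def[symmetric]
  by (rule peval_linear_map[OF module_sc lin_br_at_right assms, symmetric])

lemma fin_supp2_br_left: "fin_supp \<phi> \<Longrightarrow> fin_supp2 (\<lambda>n m. br R (\<phi> n) b m)"
  by (rule fin_supp2_compose[of "\<lambda>v m. br R v b m", OF lin_zero[OF lin_br_left] fin_supp_br])

lemma fin_supp2_br_right: "fin_supp \<phi> \<Longrightarrow> fin_supp2 (\<lambda>n m. br R a (\<phi> n) m)"
  by (rule fin_supp2_compose[of "\<lambda>v m. br R a v m", OF lin_zero[OF lin_br_right] fin_supp_br])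

lemma peval3_shear_br_left:
  assumes "fin_supp2 \<phi>"
  shows "peval3 (sc R) (\<lambda>n. shear_coeffs (sc R) 1 (\<lambda>n' m. br R (\<phi> n n') b m)) x y z
       = br_at R (y + z) (peval2 (sc R) \<phi> x y) b"
proof -
  have "peval2 (sc R) (shear_coeffs (sc R) 1 (\<lambda>n' m. br R (\<phi> n n') b m)) y z
      = br_at R (y + z) (peval (sc R) (\<phi> n) y) b" for n
    using peval2_shear_coeffs[OF module_sc fin_supp2_br_left[OF fin_supp2_row[OF assms]]]
      peval2_br_left[OF fin_supp2_row[OF assms]]
    by (simp add: add.commute)
  then show ?thesis
    unfolding peval3_def peval2_def[of _ \<phi>]
    using peval_linear_map[OF module_sc lin_br_at_left fin_supp2_peval[OF assms]] by simp
qed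

lemma peval3_br_right:
  assumes "fin_supp2 \<phi>"
  shows "peval3 (sc R) (\<lambda>n i j. br R a (\<phi> n i) j) x y z = br_at R z a (peval2 (sc R) \<phi> x y)"
  unfolding peval3_def peval2_br_right[OF fin_supp2_row[OF assms]] peval2_def[of _ \<phi>]
  using peval_linear_map[OF module_sc lin_br_at_right fin_supp2_peval[OF assms]] by simp

lemma peval_conf_lin_D:
  assumes "conf_lin R pf f"
  shows "peval (sc R) (f (D R a)) x = D R (peval (sc R) (f a) x) + sc R x (peval (sc R) (f a) x)"
proof -
  have fa: "fin_supp (f a)" by (rule conf_lin_fin_supp[OF assms])
  have "f (D R a) = (\<lambda>n. D R (f a n) + (if n = 0 then 0 else f a (n - 1)))"
    by (simp add: fun_eq_iff conf_lin_D[OF assms])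
  then show ?thesis
    using peval_add[OF module_sc fin_supp_map[of "D R", OF lin_zero[OF lin_D] fa] fin_supp_shift[OF fa]]
      peval_linear_map[OF module_sc lin_D fa] peval_shift[OF module_sc fa]
    by simp
qed

lemma peval_hder_br:
  assumes f: "hder R k l pf f" and "a \<in> Rg R p" "b \<in> Rg R q"
  shows "peval (sc R) (f (br_at R z a b)) x
       = br_at R (x + z) (peval (sc R) (f a) x) (ab_pow R k l b)
         + sc R (sgn2 (p \<and> pf)) (br_at R z (ab_pow R k l a) (peval (sc R) (f b) x))"
proof -
  have fl: "conf_lin R pf f" by (rule hder_conf_lin[OF f])
  define e where "e = sgn2 (p \<and> pf)"
  define w where "w n m = br R (f a n) (ab_pow R k l b) m" for n m
  define w' where "w' n m = br R (ab_pow R k l a) (f b n) m" for n m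
  have w: "fin_supp2 w" unfolding w_def by (rule fin_supp2_br_left[OF conf_lin_fin_supp[OF fl]])
  have w': "fin_supp2 w'" unfolding w'_def by (rule fin_supp2_br_right[OF conf_lin_fin_supp[OF fl]])
  have ew': "fin_supp2 (\<lambda>n m. sc R e (w' n m))"
    by (rule fin_supp2_map[OF _ w']) (simp add: module.scale_zero_right[OF module_sc])
  have "f (br_at R z a b) = (\<lambda>n. peval (sc R) (\<lambda>j. f (br R a b j) n) z)"
    unfolding br_at_def fun_eq_iff
    by (intro allI peval_linear_map[OF module_sc conf_lin_lin[OF fl] fin_supp_br])
  then have "peval (sc R) (f (br_at R z a b)) x = peval2 (sc R) (\<lambda>n j. f (br R a b j) n) x z"
    by (simp add: peval2_def)
  also have "\<dots> = peval2 (sc R) (\<lambda>n j. shear_coeffs (sc R) 1 w n j + sc R e (w' n j)) x z"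
    unfolding w_def w'_def e_def hder_br[OF f assms(2,3)] ..
  also have "\<dots> = peval2 (sc R) w x (z + x) + sc R e (peval2 (sc R) w' x z)"
    using peval2_add[OF module_sc fin_supp2_shear_coeffs[OF module_sc w] ew']
      peval2_linear_map[OF module_sc lin_scale[OF module_sc] w'] peval2_shear_coeffs[OF module_sc w]
    by simp
  also have "\<dots> = br_at R (x + z) (peval (sc R) (f a) x) (ab_pow R k l b)
         + sc R e (br_at R z (ab_pow R k l a) (peval (sc R) (f b) x))"
    unfolding w_def w'_def
    by (simp add: peval2_br_left peval2_br_right conf_lin_fin_supp[OF fl] add.commute)
  finally show ?thesis unfolding e_def .
qed

lemma hder_at_peval:
  assumes f: "hder R k l pf f"
  shows "hder_at R k l pf x (\<lambda>a. peval (sc R) (f a) x)"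
proof -
  have fl: "conf_lin R pf f" by (rule hder_conf_lin[OF f])
  have commute: "peval (sc R) (f (T a)) x = T (peval (sc R) (f a) x)"
    if "lin (sc R) T" "\<And>a n. f (T a) n = T (f a n)" for T a
  proof -
    have "f (T a) = (\<lambda>n. T (f a n))" using that(2) by (simp add: fun_eq_iff)
    then show ?thesis using peval_linear_map[OF module_sc that(1) conf_lin_fin_supp[OF fl]] by simp
  qed
  show ?thesis
    unfolding hder_at_def
  proof (intro conjI allI impI)
    show "lin (sc R) (\<lambda>a. peval (sc R) (f a) x)"
      by (rule lin_peval[OF module_sc conf_lin_fin_supp[OF fl] conf_lin_lin[OF fl]])
  next
    fix p a assume "a \<in> Rg R p"
    then show "peval (sc R) (f a) x \<in> Rg R (p \<noteq> pf)"
      by (intro peval_in_subspace[OF module_sc csubspace_Rg] conf_lin_Rg[OF fl])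
  qed (simp_all add: commute lin_alph lin_bet hder_alph[OF f] hder_bet[OF f]
         peval_conf_lin_D[OF fl] peval_hder_br[OF f])
qed

text \<open>Expanding both composites on a bracket gives six kinds of terms; those of the shape
  \<open>A2\<close> and \<open>A3\<close> below occur in both and cancel in the supercommutator.\<close>

lemma hder_at_commutator_br:
  assumes F: "hder_at R k l pf x F" and G: "hder_at R s t pg u G"
    and b: "b \<in> Rg R p" and c: "c \<in> Rg R q"
  defines "H \<equiv> \<lambda>a. F (G a) - sc R (sgn2 (pf \<and> pg)) (G (F a))"
  shows "H (br_at R z b c) = br_at R (x + u + z) (H b) (ab_pow R (k + s) (l + t) c)
           + sc R (sgn2 (p \<and> (pf \<noteq> pg))) (br_at R z (ab_pow R (k + s) (l + t) b) (H c))"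
proof -
  interpret module "sc R" by (rule module_sc)
  let ?\<gamma> = "ab_pow R (k + s) (l + t)" and ?\<gamma>f = "ab_pow R k l" and ?\<gamma>g = "ab_pow R s t"
  let ?B = "br_at R"
  have \<gamma>fg: "?\<gamma>f (?\<gamma>g v) = ?\<gamma> v" and \<gamma>gf: "?\<gamma>g (?\<gamma>f v) = ?\<gamma> v" for v
    by (simp_all add: ab_pow_ab_pow add.commute)
  have Fg: "F (?\<gamma>g v) = ?\<gamma>g (F v)" and Gf: "G (?\<gamma>f v) = ?\<gamma>f (G v)" for v
    by (simp_all add: hder_at_ab_pow[OF F] hder_at_ab_pow[OF G])
  have linF: "lin (sc R) F" and linG: "lin (sc R) G" by (rule hder_at_lin[OF F], rule hder_at_lin[OF G])
  define A1 where "A1 = ?B (x + u + z) (F (G b)) (?\<gamma> c)"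
  define A2 where "A2 = ?B (u + z) (?\<gamma>f (G b)) (?\<gamma>g (F c))"
  define A3 where "A3 = ?B (x + z) (?\<gamma>g (F b)) (?\<gamma>f (G c))"
  define A4 where "A4 = ?B z (?\<gamma> b) (F (G c))"
  define A5 where "A5 = ?B (x + u + z) (G (F b)) (?\<gamma> c)"
  define A6 where "A6 = ?B z (?\<gamma> b) (G (F c))"
  have FG: "F (G (?B z b c)) = A1 + sc R (sgn2 ((p \<noteq> pg) \<and> pf)) A2
      + sc R (sgn2 (p \<and> pg)) (A3 + sc R (sgn2 (p \<and> pf)) A4)"
    unfolding hder_at_br[OF G b c] lin_add[OF linF] lin_scale_comm[OF linF]
      hder_at_br[OF F hder_at_Rg[OF G b] ab_pow_Rg[OF c]]
      hder_at_br[OF F ab_pow_Rg[OF b] hder_at_Rg[OF G c]]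
    by (simp add: A1_def A2_def A3_def A4_def \<gamma>fg Fg add.assoc)
  have GF: "G (F (?B z b c)) = A5 + sc R (sgn2 ((p \<noteq> pf) \<and> pg)) A3
      + sc R (sgn2 (p \<and> pf)) (A2 + sc R (sgn2 (p \<and> pg)) A6)"
    unfolding hder_at_br[OF F b c] lin_add[OF linG] lin_scale_comm[OF linG]
      hder_at_br[OF G hder_at_Rg[OF F b] ab_pow_Rg[OF c]]
      hder_at_br[OF G ab_pow_Rg[OF b] hder_at_Rg[OF F c]]
    by (simp add: A5_def A3_def A2_def A6_def \<gamma>gf Gf add_ac)
  have Hb: "?B (x + u + z) (H b) (?\<gamma> c) = A1 - sc R (sgn2 (pf \<and> pg)) A5"
    unfolding H_def A1_def A5_def by (simp add: lin_diff[OF lin_br_at_left] lin_scale_comm[OF lin_br_at_left])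
  have Hc: "?B z (?\<gamma> b) (H c) = A4 - sc R (sgn2 (pf \<and> pg)) A6"
    unfolding H_def A4_def A6_def by (simp add: lin_diff[OF lin_br_at_right] lin_scale_comm[OF lin_br_at_right])
  show ?thesis
    unfolding Hb Hc unfolding H_def FG GF
    by (cases p; cases pf; cases pg) (simp_all add: sgn2_def algebra_simps)
qed

lemma hder_at_commutator:
  assumes F: "hder_at R k l pf x F" and G: "hder_at R s t pg u G"
  shows "hder_at R (k + s) (l + t) (pf \<noteq> pg) (x + u) (\<lambda>a. F (G a) - sc R (sgn2 (pf \<and> pg)) (G (F a)))"
proof -
  interpret module "sc R" by (rule module_sc)
  have linF: "lin (sc R) F" and linG: "lin (sc R) G" by (rule hder_at_lin[OF F], rule hder_at_lin[OF G])
  let ?e = "sgn2 (pf \<and> pg)"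
  show ?thesis
    unfolding hder_at_def
  proof (intro conjI allI impI)
    show "lin (sc R) (\<lambda>a. F (G a) - sc R ?e (G (F a)))"
      by (rule lin_diff_scale[OF module_sc lin_comp[OF linF linG] lin_comp[OF linG linF]])
  next
    fix p a assume a: "a \<in> Rg R p"
    have "((p \<noteq> pg) \<noteq> pf) = (p \<noteq> (pf \<noteq> pg))" "((p \<noteq> pf) \<noteq> pg) = (p \<noteq> (pf \<noteq> pg))" by auto
    then have "F (G a) \<in> Rg R (p \<noteq> (pf \<noteq> pg))" "G (F a) \<in> Rg R (p \<noteq> (pf \<noteq> pg))"
      using hder_at_Rg[OF F hder_at_Rg[OF G a]] hder_at_Rg[OF G hder_at_Rg[OF F a]] by simp_all
    then show "F (G a) - sc R ?e (G (F a)) \<in> Rg R (p \<noteq> (pf \<noteq> pg))"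
      by (rule Rg_diff_scale)
  next
    fix a show "F (G (alph R a)) - sc R ?e (G (F (alph R a))) = alph R (F (G a) - sc R ?e (G (F a)))"
      by (simp add: hder_at_alph[OF F] hder_at_alph[OF G] lin_diff[OF lin_alph] lin_scale_comm[OF lin_alph])
  next
    fix a show "F (G (bet R a)) - sc R ?e (G (F (bet R a))) = bet R (F (G a) - sc R ?e (G (F a)))"
      by (simp add: hder_at_bet[OF F] hder_at_bet[OF G] lin_diff[OF lin_bet] lin_scale_comm[OF lin_bet])
  next
    fix a show "F (G (D R a)) - sc R ?e (G (F (D R a)))
        = D R (F (G a) - sc R ?e (G (F a))) + sc R (x + u) (F (G a) - sc R ?e (G (F a)))"
      by (simp add: hder_at_D[OF F] hder_at_D[OF G] lin_add[OF linF] lin_add[OF linG]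
          lin_scale_comm[OF linF] lin_scale_comm[OF linG] lin_diff[OF lin_D] lin_scale_comm[OF lin_D]
          scale_left_distrib scale_right_diff_distrib scale_left_commute algebra_simps)
  next
    fix p q a b z assume "a \<in> Rg R p" "b \<in> Rg R q"
    then show "F (G (br_at R z a b)) - sc R ?e (G (F (br_at R z a b)))
        = br_at R (x + u + z) (F (G a) - sc R ?e (G (F a))) (ab_pow R (k + s) (l + t) b)
          + sc R (sgn2 (p \<and> (pf \<noteq> pg))) (br_at R z (ab_pow R (k + s) (l + t) a) (F (G b) - sc R ?e (G (F b))))"
      by (rule hder_at_commutator_br[OF F G])
  qed
qed

end

section \<open>The bracket of two derivations\<close>

lemma cbr_eq_shear_coeffs:
  "cbr R pf pg f g i a j = shear_coeffs (sc R) (-1) (\<lambda>p m. f (g a m) p) i j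
     - sc R (sgn2 (pf \<and> pg)) (shear_coeffs (sc R) (-1) (\<lambda>p m. g (f a p) m) i j)"
  unfolding cbr_def shear_coeffs_def ..

lemma cbr_linear_commute:
  assumes "lin (sc R) T" "\<And>a n. f (T a) n = T (f a n)" "\<And>a n. g (T a) n = T (g a n)"
  shows "cbr R pf pg f g i (T a) j = T (cbr R pf pg f g i a j)"
proof -
  have "g (T v) = (\<lambda>n. T (g v n))" for v by (simp add: fun_eq_iff assms(3))
  then show ?thesis
    unfolding cbr_eq_shear_coeffs
    by (simp add: lin_diff[OF assms(1)] lin_scale_comm[OF assms(1)] shear_coeffs_linear_map[OF assms(1)]
        assms(2))
qed

context lcsa_structure
begin

context
  fixes pf pg :: bool and f g :: "'r \<Rightarrow> nat \<Rightarrow> 'r"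
  assumes f: "conf_lin R pf f" and g: "conf_lin R pg g"
begin

lemma fin_supp2_cbr: "fin_supp2 (\<lambda>i j. cbr R pf pg f g i a j)"
proof -
  have fg: "fin_supp2 (\<lambda>p m. f (g a m) p)"
    by (rule fin_supp2_swap[OF fin_supp2_compose[of f, OF lin_zero[OF conf_lin_lin[OF f]]
          conf_lin_fin_supp[OF f] conf_lin_fin_supp[OF g]]])
  have gf: "fin_supp2 (\<lambda>p m. g (f a p) m)"
    by (rule fin_supp2_compose[of g, OF lin_zero[OF conf_lin_lin[OF g]]
          conf_lin_fin_supp[OF g] conf_lin_fin_supp[OF f]])
  show ?thesis
    unfolding cbr_eq_shear_coeffs
    by (rule fin_supp2_combine[OF _ fin_supp2_shear_coeffs[OF module_sc fg]
          fin_supp2_shear_coeffs[OF module_sc gf]])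
       (simp add: module.scale_zero_right[OF module_sc])
qed

lemma lin_cbr: "lin (sc R) (\<lambda>a. cbr R pf pg f g i a j)"
proof -
  have "lin (sc R) (\<lambda>a. f (g a m) p)" "lin (sc R) (\<lambda>a. g (f a p) m)" for p m
    by (rule lin_comp[OF conf_lin_lin[OF f] conf_lin_lin[OF g]],
        rule lin_comp[OF conf_lin_lin[OF g] conf_lin_lin[OF f]])
  then show ?thesis
    unfolding cbr_eq_shear_coeffs
    by (intro lin_diff_scale[OF module_sc]
        lin_shear_coeffs[OF module_sc, where V = "\<lambda>a p m. f (g a m) p"]
        lin_shear_coeffs[OF module_sc, where V = "\<lambda>a p m. g (f a p) m"])
qed

lemma cbr_Rg: "a \<in> Rg R q \<Longrightarrow> cbr R pf pg f g i a j \<in> Rg R (q \<noteq> (pf \<noteq> pg))"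
proof -
  assume a: "a \<in> Rg R q"
  have "((q \<noteq> pg) \<noteq> pf) = (q \<noteq> (pf \<noteq> pg))" "((q \<noteq> pf) \<noteq> pg) = (q \<noteq> (pf \<noteq> pg))" by auto
  then have "f (g a m) p \<in> Rg R (q \<noteq> (pf \<noteq> pg))" "g (f a p) m \<in> Rg R (q \<noteq> (pf \<noteq> pg))" for p m
    using conf_lin_Rg[OF f conf_lin_Rg[OF g a]] conf_lin_Rg[OF g conf_lin_Rg[OF f a]] by simp_all
  then have "shear_coeffs (sc R) (-1) (\<lambda>p m. f (g a m) p) i j \<in> Rg R (q \<noteq> (pf \<noteq> pg))"
      "shear_coeffs (sc R) (-1) (\<lambda>p m. g (f a p) m) i j \<in> Rg R (q \<noteq> (pf \<noteq> pg))"
    by (simp_all add: shear_coeffs_in_subspace[OF module_sc csubspace_Rg])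
  then show ?thesis unfolding cbr_eq_shear_coeffs by (rule Rg_diff_scale)
qed

lemma peval2_cbr:
  "peval2 (sc R) (\<lambda>i j. cbr R pf pg f g i a j) x y
   = peval (sc R) (f (peval (sc R) (g a) (y - x))) x
     - sc R (sgn2 (pf \<and> pg)) (peval (sc R) (g (peval (sc R) (f a) x)) (y - x))"
proof -
  define V where "V p m = f (g a m) p" for p m
  define V' where "V' p m = g (f a p) m" for p m
  have V: "fin_supp2 V" unfolding V_def
    by (rule fin_supp2_swap[OF fin_supp2_compose[of f, OF lin_zero[OF conf_lin_lin[OF f]]
          conf_lin_fin_supp[OF f] conf_lin_fin_supp[OF g]]])
  have V': "fin_supp2 V'" unfolding V'_def
    by (rule fin_supp2_compose[of g, OF lin_zero[OF conf_lin_lin[OF g]]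
          conf_lin_fin_supp[OF g] conf_lin_fin_supp[OF f]])
  have eV': "fin_supp2 (\<lambda>i j. sc R (sgn2 (pf \<and> pg)) (shear_coeffs (sc R) (-1) V' i j))"
    by (rule fin_supp2_map[OF _ fin_supp2_shear_coeffs[OF module_sc V']])
       (simp add: module.scale_zero_right[OF module_sc])
  have "f (peval (sc R) (g a) (y - x)) = (\<lambda>p. peval (sc R) (\<lambda>m. f (g a m) p) (y - x))"
    unfolding fun_eq_iff
    by (intro allI peval_linear_map[OF module_sc conf_lin_lin[OF f] conf_lin_fin_supp[OF g]])
  then have "peval2 (sc R) V x (y - x) = peval (sc R) (f (peval (sc R) (g a) (y - x))) x"
    unfolding peval2_def V_def by simp
  moreover have "peval2 (sc R) V' x (y - x) = peval (sc R) (g (peval (sc R) (f a) x)) (y - x)"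
    unfolding peval2_def V'_def
    using peval_linear_map[OF module_sc lin_peval[OF module_sc conf_lin_fin_supp[OF g] conf_lin_lin[OF g]]
        conf_lin_fin_supp[OF f]]
    by simp
  moreover have "peval2 (sc R) (\<lambda>i j. cbr R pf pg f g i a j) x y
      = peval2 (sc R) (shear_coeffs (sc R) (-1) V) x y
        - sc R (sgn2 (pf \<and> pg)) (peval2 (sc R) (shear_coeffs (sc R) (-1) V') x y)"
    unfolding cbr_eq_shear_coeffs V_def[symmetric] V'_def[symmetric]
      peval2_diff[OF module_sc fin_supp2_shear_coeffs[OF module_sc V] eV']
      peval2_linear_map[OF module_sc lin_scale[OF module_sc] fin_supp2_shear_coeffs[OF module_sc V']] ..
  ultimately show ?thesis
    by (simp add: peval2_shear_coeffs[OF module_sc V] peval2_shear_coeffs[OF module_sc V'])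
qed

end

context
  fixes k l s t :: nat and pf pg :: bool and f g :: "'r \<Rightarrow> nat \<Rightarrow> 'r"
  assumes f: "hder R k l pf f" and g: "hder R s t pg g"
begin

abbreviation h :: "nat \<Rightarrow> 'r \<Rightarrow> nat \<Rightarrow> 'r" where
  "h \<equiv> cbr R pf pg f g"

lemma hder_at_peval2_cbr:
  "hder_at R (k + s) (l + t) (pf \<noteq> pg) y (\<lambda>a. peval2 (sc R) (\<lambda>i j. h i a j) x y)"
  using hder_at_commutator[OF hder_at_peval[OF f, of x] hder_at_peval[OF g, of "y - x"]]
  unfolding peval2_cbr[OF hder_conf_lin[OF f] hder_conf_lin[OF g]] by simp

lemma cbr_D: "h i (D R a) j = D R (h i a j) + (if j = 0 then 0 else h i a (j - 1))"
proof -
  have fs: "fin_supp2 (\<lambda>i j. h i v j)" for v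
    by (rule fin_supp2_cbr[OF hder_conf_lin[OF f] hder_conf_lin[OF g]])
  have rhs: "fin_supp2 (\<lambda>i j. D R (h i a j) + (if j = 0 then 0 else h i a (j - 1)))"
    by (rule fin_supp2_combine[OF _ fin_supp2_map[of "D R", OF lin_zero[OF lin_D] fs]
          fin_supp2_shift_right[OF fs]]) simp
  have "(\<lambda>i j. h i (D R a) j) = (\<lambda>i j. D R (h i a j) + (if j = 0 then 0 else h i a (j - 1)))"
  proof (rule peval2_eqI[OF module_sc fs rhs])
    fix x y
    show "peval2 (sc R) (\<lambda>i j. h i (D R a) j) x y
        = peval2 (sc R) (\<lambda>i j. D R (h i a j) + (if j = 0 then 0 else h i a (j - 1))) x y"
      using hder_at_D[OF hder_at_peval2_cbr[where x = x and y = y], where a = a]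
        peval2_add[OF module_sc fin_supp2_map[of "D R", OF lin_zero[OF lin_D] fs] fin_supp2_shift_right[OF fs]]
        peval2_linear_map[OF module_sc lin_D fs] peval2_shift_right[OF module_sc fs]
      by simp
  qed
  then show ?thesis by (simp add: fun_eq_iff)
qed

lemma cbr_br:
  assumes b: "b \<in> Rg R p" and c: "c \<in> Rg R q"
  shows "h n (br R b c j) i
       = shift2 (sc R) (\<lambda>n' m. br R (h n b n') (ab_pow R (k + s) (l + t) c) m) i j
         + sc R (sgn2 (p \<and> (pf \<noteq> pg))) (br R (ab_pow R (k + s) (l + t) b) (h n c i) j)"
proof -
  let ?\<gamma> = "ab_pow R (k + s) (l + t)"
  define e where "e = sgn2 (p \<and> (pf \<noteq> pg))"
  have lin_h: "lin (sc R) (\<lambda>a. h i a j)" for i j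
    by (rule lin_cbr[OF hder_conf_lin[OF f] hder_conf_lin[OF g]])
  have fs: "fin_supp2 (\<lambda>i j. h i v j)" for v
    by (rule fin_supp2_cbr[OF hder_conf_lin[OF f] hder_conf_lin[OF g]])
  define W1 where "W1 n i j = h n (br R b c j) i" for n i j
  define W2 where "W2 n = shear_coeffs (sc R) 1 (\<lambda>n' m. br R (h n b n') (?\<gamma> c) m)" for n
  define W3 where "W3 n i j = br R (?\<gamma> b) (h n c i) j" for n i j
  have W1: "fin_supp3 W1" unfolding W1_def
    by (rule fin_supp3_compose[of "\<lambda>v i j. h i v j", OF lin_zero[OF lin_h] fs fin_supp_br])
  have W2: "fin_supp3 W2" unfolding W2_def
    by (rule fin_supp3_shear_coeffs[OF module_sc fin_supp3_compose2[of "\<lambda>v m. br R v (?\<gamma> c) m",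
          OF lin_zero[OF lin_br_left] fin_supp_br fs]])
  have W3: "fin_supp3 W3" unfolding W3_def
    by (rule fin_supp3_compose2[of "\<lambda>v m. br R (?\<gamma> b) v m", OF lin_zero[OF lin_br_right] fin_supp_br fs])
  have eW3: "fin_supp3 (\<lambda>n i j. sc R e (W3 n i j))"
    by (rule fin_supp3_map[OF _ W3]) (simp add: module.scale_zero_right[OF module_sc])
  have "W1 = (\<lambda>n i j. W2 n i j + sc R e (W3 n i j))"
  proof (rule peval3_eqI[OF module_sc W1 fin_supp3_combine[OF _ W2 eW3]])
    fix x y z
    let ?H = "\<lambda>a. peval2 (sc R) (\<lambda>i j. h i a j) x y"
    have "peval3 (sc R) W1 x y z = ?H (br_at R z b c)"
      unfolding W1_def br_at_def by (rule peval3_compose[OF module_sc lin_h fin_supp_br])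
    also have "\<dots> = br_at R (y + z) (?H b) (?\<gamma> c) + sc R e (br_at R z (?\<gamma> b) (?H c))"
      unfolding e_def by (rule hder_at_br[OF hder_at_peval2_cbr b c])
    also have "\<dots> = peval3 (sc R) W2 x y z + sc R e (peval3 (sc R) W3 x y z)"
      unfolding W2_def W3_def by (simp add: peval3_shear_br_left[OF fs] peval3_br_right[OF fs])
    also have "\<dots> = peval3 (sc R) (\<lambda>n i j. W2 n i j + sc R e (W3 n i j)) x y z"
      unfolding peval3_add[OF module_sc W2 eW3] peval3_linear_map[OF module_sc lin_scale[OF module_sc] W3] ..
    finally show "peval3 (sc R) W1 x y z = peval3 (sc R) (\<lambda>n i j. W2 n i j + sc R e (W3 n i j)) x y z" .
  qed simp
  then show ?thesis
    unfolding shift2_eq_shear_coeffs e_def[symmetric] by (simp add: fun_eq_iff W1_def W2_def W3_def)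
qed

lemma hder_cbr: "hder R (k + s) (l + t) (pf \<noteq> pg) (\<lambda>a j. h n a j)"
proof -
  have fl: "conf_lin R pf f" "conf_lin R pg g" by (rule hder_conf_lin[OF f], rule hder_conf_lin[OF g])
  have "fin_supp (h n a)" for a using fin_supp2_row[OF fin_supp2_cbr[OF fl]] by simp
  then show ?thesis
    unfolding hder_def conf_lin_def
    by (intro conjI allI impI cbr_Rg[OF fl])
       (simp_all add: lin_cbr[OF fl] cbr_D cbr_br[unfolded ab_pow_def]
          cbr_linear_commute[where T = "alph R" and f = f and g = g, OF lin_alph hder_alph[OF f] hder_alph[OF g]]
          cbr_linear_commute[where T = "bet R" and f = f and g = g, OF lin_bet hder_bet[OF f] hder_bet[OF g]])
qed

end

end

theorem mainTheorem10:
  fixes R :: "('r::ab_group_add) lcsa"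
    and k l s t :: nat
    and pf pg :: bool
    and f g :: "'r \<Rightarrow> nat \<Rightarrow> 'r"
  assumes "BiHom_LCSA R"
    and "hder R k l pf f"
    and "hder R s t pg g"
  shows "\<forall>n. is_der R (k + s) (l + t) (\<lambda>a j. cbr R pf pg f g n a j)"
proof
  fix n
  interpret lcsa_structure R by (rule BiHom_LCSA_imp_lcsa_structure[OF assms(1)])
  show "is_der R (k + s) (l + t) (\<lambda>a j. cbr R pf pg f g n a j)"
    unfolding is_der_def using hder_cbr[OF assms(2,3)] by blast
qed

end
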